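(* For every natural number $\alpha<\omega$ and every $n\in\mathbb N$, $n\ge1$, \[ f_{(\omega^{\omega^\alpha})^n}\in d_{1/2}^{\omega^{1+\alpha}\cdot n}\Big(B_{\ell_1([0,(\omega^{\omega^\alpha})^n])}\Big). \]
   Context: Ordinal arithmetic throughout. For an ordinal $\gamma$, $[0,\gamma]$ has the order topology and $\ell_1([0,\gamma])$ is identified with $C([0,\gamma])^*$ (weak$^*$-topology accordingly). For $\beta\le\gamma$, $f_\beta\in\ell_1([0,\gamma])$ is the indicator of $\{\beta\}$. For a weak$^*$-compact $K$ in a dual $X^*$: $H(x,t)=\{x^*: x^*(x)>t\}$; a weak$^*$-slice of $K$ is a nonempty $H(x,t)\cap K$; $d_\varepsilon K$ is $K$ minus the union of all weak$^*$-slices of $K$ of norm diameter $<\varepsilon$; $d_\varepsilon^0K=K$, $d_\varepsilon^{\beta+1}K=d_\varepsilon(d_\varepsilon^\beta K)$, $d_\varepsilon^\beta K=\bigcap_{\mu<\beta}d_\varepsilon^\mu K$ for limit $\beta$. *)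

theory Defs
  imports "HOL-Analysis.Analysis" "HOL-Library.Multiset_Order"
begin

text \<open>A multiset M over a well-ordered exponent type represents the ordinal
  in Cantor normal form whose exponents (with multiplicity) are the elements of M,
  i.e. the sum of omega^e over e in M in decreasing order.
  The multiset (Dershowitz-Manna) order of Multiset_Order is exactly the ordinal
  order on Cantor normal forms.  Hence nat (= ordinals below omega) encodes
  finite ordinals, nat multiset encodes the ordinals below omega^omega,
  and nat multiset multiset encodes the ordinals below omega^(omega^omega).\<close>

definition omega_pow_times :: "'e \<Rightarrow> nat \<Rightarrow> 'e multiset" where
  "omega_pow_times e n = replicate_mset n e"

definition omega_pow :: "'e \<Rightarrow> 'e multiset" where
  "omega_pow e = {#e#}"

definition is_pred :: "'i::wellorder \<Rightarrow> 'i \<Rightarrow> bool" where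
  "is_pred \<mu> \<beta> \<longleftrightarrow> \<mu> < \<beta> \<and> \<not> (\<exists>\<nu>. \<mu> < \<nu> \<and> \<nu> < \<beta>)"

definition trans_iter :: "('b set \<Rightarrow> 'b set) \<Rightarrow> 'b set \<Rightarrow> 'i::wellorder \<Rightarrow> 'b set" where
  "trans_iter D K = wfrec {(\<mu>, \<beta>). \<mu> < \<beta>}
     (\<lambda>F \<beta>. if \<not> (\<exists>\<mu>. \<mu> < \<beta>) then K
            else if (\<exists>\<mu>. is_pred \<mu> \<beta>) then D (F (THE \<mu>. is_pred \<mu> \<beta>))
            else (\<Inter>\<mu>\<in>{\<mu>. \<mu> < \<beta>}. F \<mu>))"

text \<open>Real-valued continuous functions on [0,gamma] with the order topology:
  each point beta other than 0 has the neighbourhood base (delta, beta], delta < beta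
  (right-hand neighbourhoods of beta can always be chosen as {beta} itself,
  since beta has a successor or is the maximum gamma).\<close>
definition cont_ord :: "'a::wellorder \<Rightarrow> ('a \<Rightarrow> real) \<Rightarrow> bool" where
  "cont_ord \<gamma> x \<longleftrightarrow> (\<forall>\<beta>\<le>\<gamma>. \<forall>e>0. (\<forall>\<delta>. \<not> \<delta> < \<beta>) \<or>
       (\<exists>\<delta><\<beta>. \<forall>\<xi>. \<delta> < \<xi> \<and> \<xi> \<le> \<beta> \<longrightarrow> \<bar>x \<xi> - x \<beta>\<bar> < e))"

definition is_l1 :: "'a::wellorder \<Rightarrow> ('a \<Rightarrow> real) \<Rightarrow> bool" where
  "is_l1 \<gamma> \<mu> \<longleftrightarrow> (\<lambda>\<xi>. \<bar>\<mu> \<xi>\<bar>) summable_on {..\<gamma>} \<and> (\<forall>\<xi>. \<not> \<xi> \<le> \<gamma> \<longrightarrow> \<mu> \<xi> = 0)"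

definition l1norm :: "'a::wellorder \<Rightarrow> ('a \<Rightarrow> real) \<Rightarrow> real" where
  "l1norm \<gamma> \<mu> = (\<Sum>\<^sub>\<infinity>\<xi>\<in>{..\<gamma>}. \<bar>\<mu> \<xi>\<bar>)"

definition pairing :: "'a::wellorder \<Rightarrow> ('a \<Rightarrow> real) \<Rightarrow> ('a \<Rightarrow> real) \<Rightarrow> real" where
  "pairing \<gamma> \<mu> x = (\<Sum>\<^sub>\<infinity>\<xi>\<in>{..\<gamma>}. \<mu> \<xi> * x \<xi>)"

definition dual_ball :: "'a::wellorder \<Rightarrow> ('a \<Rightarrow> real) set" where
  "dual_ball \<gamma> = {\<mu>. is_l1 \<gamma> \<mu> \<and> l1norm \<gamma> \<mu> \<le> 1}"

definition f_ind :: "'a \<Rightarrow> 'a \<Rightarrow> real" where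
  "f_ind \<beta> = (\<lambda>\<xi>. if \<xi> = \<beta> then 1 else 0)"

definition wstar_slice :: "'a::wellorder \<Rightarrow> ('a \<Rightarrow> real) set \<Rightarrow> ('a \<Rightarrow> real) set \<Rightarrow> bool" where
  "wstar_slice \<gamma> K S \<longleftrightarrow> (\<exists>x t. cont_ord \<gamma> x \<and> S = {\<mu>\<in>K. pairing \<gamma> \<mu> x > t}) \<and> S \<noteq> {}"

definition l1diam :: "'a::wellorder \<Rightarrow> ('a \<Rightarrow> real) set \<Rightarrow> ereal" where
  "l1diam \<gamma> S = (SUP p\<in>S \<times> S. ereal (l1norm \<gamma> (\<lambda>\<xi>. fst p \<xi> - snd p \<xi>)))"

definition szlenk_d :: "'a::wellorder \<Rightarrow> real \<Rightarrow> ('a \<Rightarrow> real) set \<Rightarrow> ('a \<Rightarrow> real) set" where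
  "szlenk_d \<gamma> \<epsilon> K = K - \<Union>{S. wstar_slice \<gamma> K S \<and> l1diam \<gamma> S < ereal \<epsilon>}"

definition szlenk_iter :: "'a::wellorder \<Rightarrow> real \<Rightarrow> 'i::wellorder \<Rightarrow> ('a \<Rightarrow> real) set \<Rightarrow> ('a \<Rightarrow> real) set" where
  "szlenk_iter \<gamma> \<epsilon> \<beta> K = trans_iter (szlenk_d \<gamma> \<epsilon>) K \<beta>"

end

theory Submission
  imports Defs
begin

text \<open>
  Ordinals below
  omega^omega are nat multisets and ordinals below omega^omega^omega are nat multiset
  multisets; multiplying an ordinal e < omega^omega by omega on the left is
  image_mset Suc e.  For an ordinal xi = zeta + omega^e in Cantor normal form
  (every exponent of zeta is at least e) we show, by well-founded induction on e,
  that f_xi survives omega*e Szlenk derivations of the dual ball with eps = 1/2.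
  A limit stage omega*e is handled by showing survival at every smaller stage:
  if e = e0 + 1, xi is the limit of zeta + omega^e0 * j, and averages of 2^k point
  masses that survive omega*e0 derivations survive k more of them (halving); if
  e = e0 + omega^a with a > 0, xi is the limit of zeta + omega^(e0 + omega^(a-1) * j).
  In both cases f_xi is a weak* limit of the survivors, and in the successor case it
  stays at distance at least 1/2 from them, so it survives one further derivation.
\<close>

lemma pred_unique: "is_pred \<mu> \<beta> \<Longrightarrow> (THE \<mu>. is_pred \<mu> \<beta>) = (\<mu>::'i::wellorder)"
  unfolding is_pred_def by (rule the_equality) (auto, metis linorder_neqE)+

lemma trans_iter_eq: "trans_iter D K (\<beta>::'i::wellorder) =
   (if \<not> (\<exists>\<mu>. \<mu> < \<beta>) then K
    else if (\<exists>\<mu>. is_pred \<mu> \<beta>) then D (trans_iter D K (THE \<mu>. is_pred \<mu> \<beta>))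
    else (\<Inter>\<mu>\<in>{\<mu>. \<mu> < \<beta>}. trans_iter D K \<mu>))"
proof -
  have w: "wf {(\<mu>, \<beta>). \<mu> < (\<beta>::'i)}" by (rule wf)
  have th: "(THE \<mu>. is_pred \<mu> \<beta>) < \<beta>" if ex: "\<exists>\<mu>. is_pred \<mu> \<beta>"
  proof -
    obtain \<mu> where m: "is_pred \<mu> \<beta>" using ex by blast
    then show ?thesis using pred_unique[OF m] by (simp add: is_pred_def)
  qed
  show ?thesis
    unfolding trans_iter_def
    apply (subst wfrec[OF w])
    using th by (simp add: cut_apply)
qed

lemma trans_iter_bot: "\<not> (\<exists>\<mu>. \<mu> < \<beta>) \<Longrightarrow> trans_iter D K (\<beta>::'i::wellorder) = K"
  by (subst trans_iter_eq) simp

lemma trans_iter_pred: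
  assumes p: "is_pred \<mu> \<beta>"
  shows "trans_iter D K (\<beta>::'i::wellorder) = D (trans_iter D K \<mu>)"
proof -
  have a: "\<exists>\<mu>. \<mu> < \<beta>" using p unfolding is_pred_def by blast
  have b: "\<exists>\<mu>. is_pred \<mu> \<beta>" using p by blast
  show ?thesis
    by (subst trans_iter_eq) (simp only: a b pred_unique[OF p] if_True if_False not_True_eq_False)
qed

lemma trans_iter_lim:
  assumes "\<mu>0 < \<beta>" and np: "\<not> (\<exists>\<mu>. is_pred \<mu> \<beta>)"
  shows "trans_iter D K (\<beta>::'i::wellorder) = (\<Inter>\<mu>\<in>{\<mu>. \<mu> < \<beta>}. trans_iter D K \<mu>)"
proof -
  have a: "\<exists>\<mu>. \<mu> < \<beta>" using assms(1) by blast
  show ?thesis by (subst trans_iter_eq) (simp only: a np if_True if_False not_True_eq_False)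
qed

lemma trans_iter_anti:
  assumes sub: "\<And>A. D A \<subseteq> A"
  shows "\<mu> \<le> \<beta> \<Longrightarrow> trans_iter D K (\<beta>::'i::wellorder) \<subseteq> trans_iter D K \<mu>"
proof (induction \<beta> arbitrary: \<mu> rule: less_induct)
  case (less \<beta>)
  show ?case
  proof (cases "\<mu> = \<beta>")
    case False
    then have lt: "\<mu> < \<beta>" using less.prems by simp
    show ?thesis
    proof (cases "\<exists>\<nu>. is_pred \<nu> \<beta>")
      case True
      then obtain \<nu> where n: "is_pred \<nu> \<beta>" by blast
      then have "\<nu> < \<beta>" by (simp add: is_pred_def)
      moreover have "\<mu> \<le> \<nu>"
        using lt n unfolding is_pred_def by (meson not_le)
      ultimately have "trans_iter D K \<nu> \<subseteq> trans_iter D K \<mu>" by (rule less.IH)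
      moreover have "trans_iter D K \<beta> \<subseteq> trans_iter D K \<nu>"
        unfolding trans_iter_pred[OF n] by (rule sub)
      ultimately show ?thesis by blast
    next
      case False
      show ?thesis unfolding trans_iter_lim[OF lt False]
        by (rule INF_lower) (simp add: lt)
    qed
  qed simp
qed

section \<open>Cantor normal forms as multisets\<close>

lemma add_least_term_le:
  fixes \<zeta> H :: "'a::linorder multiset"
  assumes lt: "\<zeta> < H" and z: "\<forall>z\<in>#\<zeta>. e \<le> z" and h: "\<forall>z\<in>#H. e \<le> z"
  shows "\<zeta> + {#e#} \<le> H"
  unfolding less_eq_multiset\<^sub>H\<^sub>O
proof (intro allI impI)
  fix y assume yc: "count H y < count (\<zeta> + {#e#}) y"
  have cnt: "\<And>w. count (\<zeta> + {#e#}) w = count \<zeta> w + (if w = e then 1 else 0)" by simp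
  have HO: "\<forall>y. count H y < count \<zeta> y \<longrightarrow> (\<exists>x>y. count \<zeta> x < count H x)"
    using lt unfolding less_multiset\<^sub>H\<^sub>O by blast
  show "\<exists>x>y. count (\<zeta> + {#e#}) x < count H x"
  proof (cases "count H y < count \<zeta> y")
    case True
    then have "0 < count \<zeta> y" by linarith
    then have "y \<in># \<zeta>" using count_greater_zero_iff by metis
    then have ye: "e \<le> y" using z by blast
    obtain x where x: "x > y" "count \<zeta> x < count H x" using HO True by blast
    then have "x \<noteq> e" using ye by auto
    then have "count (\<zeta> + {#e#}) x < count H x" using x(2) cnt[of x] by simp
    then show ?thesis using x(1) by blast
  next
    case False
    have ye: "y = e"
    proof (rule ccontr)
      assume "y \<noteq> e" then show False using yc cnt[of y] False by simp
    qed
    have ceq: "count H e = count \<zeta> e" using yc cnt[of y] False ye by simp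
    obtain w where w: "count \<zeta> w < count H w" using lt_imp_ex_count_lt[OF lt] by blast
    then have "0 < count H w" by linarith
    then have "w \<in># H" using count_greater_zero_iff by metis
    then have "e \<le> w" using h by blast
    moreover have "w \<noteq> e" using w ceq by auto
    ultimately have "w > y" using ye by simp
    moreover have "count (\<zeta> + {#e#}) w < count H w" using w cnt[of w] \<open>w \<noteq> e\<close> by simp
    ultimately show ?thesis by blast
  qed
qed

lemma below_cnf_term:
  fixes \<delta> \<zeta> :: "'a::linorder multiset"
  assumes z: "\<forall>z\<in>#\<zeta>. e \<le> z" and lt: "\<delta> < \<zeta> + {#e#}"
  shows "\<delta> \<le> \<zeta> + filter_mset (\<lambda>y. y < e) \<delta>"
proof -
  define H where "H = filter_mset (\<lambda>y. \<not> y < e) \<delta>"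
  have dH: "\<delta> = H + filter_mset (\<lambda>y. y < e) \<delta>" unfolding H_def by (simp add: multiset_partition add.commute)
  have "H \<le> \<zeta>"
  proof (rule ccontr)
    assume "\<not> H \<le> \<zeta>"
    then have "\<zeta> < H" by simp
    moreover have "\<forall>z\<in>#H. e \<le> z" unfolding H_def by auto
    ultimately have "\<zeta> + {#e#} \<le> H" using add_least_term_le z by blast
    also have "H \<le> \<delta>" using dH by (metis less_eq_multiset_plus_right)
    finally show False using lt by simp
  qed
  then show ?thesis using dH by (metis add_right_mono)
qed

lemma less_single_mset: "(\<forall>y\<in>#R. y < x) \<Longrightarrow> R < {#x#}"
  by (rule ex_gt_imp_less_multiset) auto

lemma le_replicate_mset_bound: "(\<forall>y\<in>#R. y \<le> (a::'a::linorder)) \<Longrightarrow> R \<le> replicate_mset (size R) a"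
proof (induction R)
  case (add x R)
  have "{#x#} + R \<le> {#a#} + replicate_mset (size R) a"
    using add by (intro add_mono) auto
  then show ?case by simp
qed simp

lemma replicate_mset_mono: "i \<le> j \<Longrightarrow> replicate_mset i a \<le> replicate_mset j a"
  by (rule subset_eq_imp_le_multiset) (simp add: subseteq_mset_def)

lemma replicate_mset_strict_mono:
  assumes ij: "i < j"
  shows "replicate_mset i a < replicate_mset j a"
proof -
  have ne: "replicate_mset i a \<noteq> replicate_mset j a"
  proof
    assume "replicate_mset i a = replicate_mset j a"
    then have "count (replicate_mset i a) a = count (replicate_mset j a) a" by simp
    then show False using ij by simp
  qed
  have "replicate_mset i a \<subseteq># replicate_mset j a" using ij by (simp add: subseteq_mset_def)
  then show ?thesis using ne by (simp add: subset_imp_less_mset subset_mset.less_le)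
qed

lemma is_pred_add_bot: "is_pred (M::'a::{wellorder,order_bot} multiset) (M + {#bot#})"
  unfolding is_pred_def
proof (intro conjI notI)
  show "M < M + {#bot#}" by (simp add: le_multiset_right_total)
next
  assume "\<exists>\<nu>. M < \<nu> \<and> \<nu> < M + {#bot#}"
  then obtain \<nu> where n: "M < \<nu>" "\<nu> < M + {#bot#}" by blast
  have "\<nu> \<le> M + filter_mset (\<lambda>y. y < bot) \<nu>" by (rule below_cnf_term) (use n in auto)
  then show False using n by simp
qed

lemma no_pred_positive_exponents:
  fixes M :: "nat multiset"
  assumes pos: "\<forall>z\<in>#M. 0 < z" and ne: "M \<noteq> {#}"
  shows "\<not> (\<exists>\<mu>. is_pred \<mu> M)"
proof
  assume "\<exists>\<mu>. is_pred \<mu> M"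
  then obtain \<mu> where p: "\<mu> < M" "\<not> (\<exists>\<nu>. \<mu> < \<nu> \<and> \<nu> < M)" unfolding is_pred_def by blast
  define b where "b = Min (set_mset M)"
  define M0 where "M0 = M - {#b#}"
  have bM: "b \<in># M" unfolding b_def using ne by simp
  have eqM: "M = M0 + {#b#}" unfolding M0_def using bM by simp
  have bmin: "\<forall>z\<in>#M0. b \<le> z" unfolding M0_def b_def by (meson Min_le finite_set_mset in_diffD)
  define R where "R = filter_mset (\<lambda>y. y < b) \<mu>"
  have "\<mu> \<le> M0 + R" unfolding R_def by (rule below_cnf_term[OF bmin]) (use p eqM in metis)
  also have "\<dots> < M0 + R + {#0#}" by (simp add: le_multiset_right_total)
  finally have l1: "\<mu> < M0 + R + {#0#}" .
  have "R + {#0#} < {#b#}" by (rule less_single_mset) (use pos bM in \<open>auto simp: R_def\<close>)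
  then have "M0 + R + {#0#} < M" unfolding eqM add.assoc by (rule add_strict_left_mono)
  then show False using p l1 by blast
qed

lemma finite_support_infsum:
  fixes g :: "'a \<Rightarrow> real"
  assumes "finite F" "F \<subseteq> A" "\<And>\<xi>. \<xi> \<in> A \<Longrightarrow> \<xi> \<notin> F \<Longrightarrow> g \<xi> = 0"
  shows "infsum g A = sum g F" "g summable_on A"
proof -
  have "infsum g A = infsum g F"
    by (rule infsum_cong_neutral) (use assms in auto)
  then show "infsum g A = sum g F" using assms(1) by simp
  have "g summable_on F \<longleftrightarrow> g summable_on A"
    by (rule summable_on_cong_neutral) (use assms in auto)
  then show "g summable_on A" using assms(1) by simp
qed

lemma finite_support_pairing:
  assumes "finite F" "F \<subseteq> {..\<gamma>}" "\<And>\<xi>. \<xi> \<notin> F \<Longrightarrow> \<mu> \<xi> = 0"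
  shows "pairing \<gamma> \<mu> x = (\<Sum>\<xi>\<in>F. \<mu> \<xi> * x \<xi>)"
  unfolding pairing_def by (rule finite_support_infsum(1)) (use assms in auto)

lemma finite_support_norm:
  assumes "finite F" "F \<subseteq> {..\<gamma>}" "\<And>\<xi>. \<xi> \<notin> F \<Longrightarrow> \<mu> \<xi> = 0"
  shows "l1norm \<gamma> \<mu> = (\<Sum>\<xi>\<in>F. \<bar>\<mu> \<xi>\<bar>)"
  unfolding l1norm_def by (rule finite_support_infsum(1)) (use assms in auto)

lemma finite_support_in_ball:
  assumes "finite F" "F \<subseteq> {..\<gamma>}" "\<And>\<xi>. \<xi> \<notin> F \<Longrightarrow> \<mu> \<xi> = 0"
    and "(\<Sum>\<xi>\<in>F. \<bar>\<mu> \<xi>\<bar>) \<le> 1"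
  shows "\<mu> \<in> dual_ball \<gamma>"
proof -
  have "(\<lambda>\<xi>. \<bar>\<mu> \<xi>\<bar>) summable_on {..\<gamma>}"
    by (rule finite_support_infsum(2)[of F]) (use assms in auto)
  moreover have "\<forall>\<xi>. \<not> \<xi> \<le> \<gamma> \<longrightarrow> \<mu> \<xi> = 0" using assms(2,3) by auto
  ultimately show ?thesis unfolding dual_ball_def is_l1_def
    using finite_support_norm[OF assms(1-3)] assms(4) by simp
qed

definition unif :: "'a set \<Rightarrow> 'a \<Rightarrow> real" where
  "unif S = (\<lambda>\<xi>. if \<xi> \<in> S then 1 / real (card S) else 0)"

lemma f_ind_in_ball: "\<xi> \<le> \<gamma> \<Longrightarrow> f_ind \<xi> \<in> dual_ball \<gamma>"
  by (rule finite_support_in_ball[of "{\<xi>}"]) (auto simp: f_ind_def)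

lemma f_ind_pairing: "\<xi> \<le> \<gamma> \<Longrightarrow> pairing \<gamma> (f_ind \<xi>) x = x \<xi>"
  by (subst finite_support_pairing[of "{\<xi>}"]) (auto simp: f_ind_def)

lemma unif_singleton: "unif {s} = f_ind s"
  by (rule ext) (simp add: unif_def f_ind_def)

lemma unif_in_ball:
  assumes "finite S" "S \<noteq> {}" "S \<subseteq> {..\<gamma>}"
  shows "unif S \<in> dual_ball \<gamma>"
proof (rule finite_support_in_ball[of S])
  have "(\<Sum>\<xi>\<in>S. \<bar>unif S \<xi>\<bar>) = (\<Sum>\<xi>\<in>S. 1 / real (card S))"
    by (rule sum.cong) (auto simp: unif_def)
  also have "\<dots> = 1" using assms(1,2) by simp
  finally show "(\<Sum>\<xi>\<in>S. \<bar>unif S \<xi>\<bar>) \<le> 1" by simp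
qed (use assms in \<open>auto simp: unif_def\<close>)

lemma unif_pairing:
  assumes "finite S" "S \<subseteq> {..\<gamma>}"
  shows "pairing \<gamma> (unif S) x = (\<Sum>\<xi>\<in>S. x \<xi>) / real (card S)"
proof -
  have "pairing \<gamma> (unif S) x = (\<Sum>\<xi>\<in>S. unif S \<xi> * x \<xi>)"
    by (rule finite_support_pairing) (use assms in \<open>auto simp: unif_def\<close>)
  also have "\<dots> = (\<Sum>\<xi>\<in>S. (1 / real (card S)) * x \<xi>)"
    by (rule sum.cong) (auto simp: unif_def)
  also have "\<dots> = (\<Sum>\<xi>\<in>S. x \<xi>) / real (card S)"
    by (simp add: sum_divide_distrib)
  finally show ?thesis .
qed

lemma dist_f_ind_unif:
  assumes "\<xi> \<le> \<gamma>" "finite S" "S \<subseteq> {..\<gamma>}" "\<xi> \<notin> S"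
  shows "1/2 \<le> l1norm \<gamma> (\<lambda>\<eta>. f_ind \<xi> \<eta> - unif S \<eta>)"
proof -
  have "l1norm \<gamma> (\<lambda>\<eta>. f_ind \<xi> \<eta> - unif S \<eta>) = (\<Sum>\<eta>\<in>insert \<xi> S. \<bar>f_ind \<xi> \<eta> - unif S \<eta>\<bar>)"
    by (rule finite_support_norm) (use assms in \<open>auto simp: f_ind_def unif_def\<close>)
  also have "\<dots> = \<bar>f_ind \<xi> \<xi> - unif S \<xi>\<bar> + (\<Sum>\<eta>\<in>S. \<bar>f_ind \<xi> \<eta> - unif S \<eta>\<bar>)"
    using assms by simp
  also have "\<dots> \<ge> 1" using assms by (simp add: f_ind_def unif_def sum_nonneg)
  finally show ?thesis by simp
qed

lemma dist_unif_half:
  assumes "finite S" "T \<subseteq> S" "S \<subseteq> {..\<gamma>}" "card S = 2 * card T" "T \<noteq> {}"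
  shows "1/2 \<le> l1norm \<gamma> (\<lambda>\<eta>. unif S \<eta> - unif T \<eta>)"
proof -
  have fT: "finite T" using assms(1,2) finite_subset by blast
  have cT: "card T > 0" using fT assms(5) by (simp add: card_gt_0_iff)
  have "l1norm \<gamma> (\<lambda>\<eta>. unif S \<eta> - unif T \<eta>) = (\<Sum>\<eta>\<in>S. \<bar>unif S \<eta> - unif T \<eta>\<bar>)"
    by (rule finite_support_norm) (use assms in \<open>auto simp: unif_def\<close>)
  also have "\<dots> \<ge> (\<Sum>\<eta>\<in>S - T. \<bar>unif S \<eta> - unif T \<eta>\<bar>)"
    by (rule sum_mono2) (use assms in auto)
  also have "(\<Sum>\<eta>\<in>S - T. \<bar>unif S \<eta> - unif T \<eta>\<bar>) = (\<Sum>\<eta>\<in>S - T. 1 / real (card S))"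
    by (rule sum.cong) (auto simp: unif_def)
  also have "\<dots> = real (card (S - T)) / real (card S)" by simp
  also have "card (S - T) = card T" using card_Diff_subset[OF fT assms(2)] assms(4) by simp
  finally show ?thesis using assms(4) cT by simp
qed

section \<open>Propagation rules for Szlenk derivations\<close>

definition wstar_adherent :: "'a::wellorder \<Rightarrow> ('a \<Rightarrow> real) \<Rightarrow> ('a \<Rightarrow> real) set \<Rightarrow> bool" where
  "wstar_adherent \<gamma> \<mu> A \<longleftrightarrow>
     (\<forall>x t. cont_ord \<gamma> x \<longrightarrow> pairing \<gamma> \<mu> x > t \<longrightarrow> (\<exists>a\<in>A. pairing \<gamma> a x > t))"

lemma szlenk_d_subset: "szlenk_d \<gamma> \<epsilon> A \<subseteq> A"
  unfolding szlenk_d_def by blast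

lemma szlenk_iter_anti:
  "\<mu> \<le> \<beta> \<Longrightarrow> szlenk_iter \<gamma> \<epsilon> (\<beta>::'i::wellorder) K \<subseteq> szlenk_iter \<gamma> \<epsilon> \<mu> K"
  unfolding szlenk_iter_def by (rule trans_iter_anti[OF szlenk_d_subset])

lemma szlenk_iter_pred:
  "is_pred \<nu> \<beta> \<Longrightarrow> szlenk_iter \<gamma> \<epsilon> (\<beta>::'i::wellorder) K = szlenk_d \<gamma> \<epsilon> (szlenk_iter \<gamma> \<epsilon> \<nu> K)"
  unfolding szlenk_iter_def by (rule trans_iter_pred)

lemma szlenk_iter_limI:
  "\<mu>0 < \<beta> \<Longrightarrow> \<not> (\<exists>\<mu>. is_pred \<mu> \<beta>) \<Longrightarrow> (\<And>\<nu>. \<nu> < \<beta> \<Longrightarrow> z \<in> szlenk_iter \<gamma> \<epsilon> \<nu> K)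
   \<Longrightarrow> z \<in> szlenk_iter \<gamma> \<epsilon> (\<beta>::'i::wellorder) K"
  unfolding szlenk_iter_def by (subst trans_iter_lim) auto

lemma slice_meets_adherent:
  assumes "A \<subseteq> L" "wstar_adherent \<gamma> \<mu> A" "\<mu> \<in> S" "wstar_slice \<gamma> L S"
  obtains a where "a \<in> A" "a \<in> S"
proof -
  obtain x t where xt: "cont_ord \<gamma> x" "S = {\<mu>'\<in>L. pairing \<gamma> \<mu>' x > t}"
    using assms(4) unfolding wstar_slice_def by blast
  then obtain a where "a \<in> A" "pairing \<gamma> a x > t"
    using assms(2,3) unfolding wstar_adherent_def by blast
  then show ?thesis using that xt assms(1) by blast
qed

lemma szlenk_iter_adherent:
  fixes \<beta> :: "'i::wellorder"
  assumes "A \<subseteq> szlenk_iter \<gamma> \<epsilon> \<beta> K" and mK: "\<mu> \<in> K" and cl: "wstar_adherent \<gamma> \<mu> A"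
  shows "\<mu> \<in> szlenk_iter \<gamma> \<epsilon> \<beta> K"
  using assms(1)
proof (induction \<beta> rule: less_induct)
  case (less \<beta>)
  have A\<nu>: "A \<subseteq> szlenk_iter \<gamma> \<epsilon> \<nu> K" if "\<nu> < \<beta>" for \<nu>
    using less.prems szlenk_iter_anti[of \<nu> \<beta>] that by (meson less_imp_le order_trans)
  have IH: "\<mu> \<in> szlenk_iter \<gamma> \<epsilon> \<nu> K" if "\<nu> < \<beta>" for \<nu>
    using less.IH[OF that A\<nu>[OF that]] .
  consider (bot) "\<not> (\<exists>\<nu>. \<nu> < \<beta>)" | (succ) \<nu> where "is_pred \<nu> \<beta>"
    | (lim) \<nu>0 where "\<nu>0 < \<beta>" "\<not> (\<exists>\<nu>. is_pred \<nu> \<beta>)" by blast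
  then show ?case
  proof cases
    case bot
    then show ?thesis unfolding szlenk_iter_def using trans_iter_bot mK by metis
  next
    case succ
    then have "\<nu> < \<beta>" by (simp add: is_pred_def)
    have "\<mu> \<notin> S" if S: "wstar_slice \<gamma> (szlenk_iter \<gamma> \<epsilon> \<nu> K) S" "l1diam \<gamma> S < ereal \<epsilon>" for S
    proof
      assume "\<mu> \<in> S"
      then obtain a where "a \<in> A" "a \<in> S"
        using slice_meets_adherent[OF A\<nu>[OF \<open>\<nu> < \<beta>\<close>] cl _ S(1)] by blast
      then show False using less.prems S szlenk_iter_pred[OF succ] unfolding szlenk_d_def by blast
    qed
    then show ?thesis unfolding szlenk_iter_pred[OF succ] szlenk_d_def
      using IH[OF \<open>\<nu> < \<beta>\<close>] by blast
  next
    case lim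
    then show ?thesis by (rule szlenk_iter_limI) (rule IH)
  qed
qed

lemma szlenk_iter_far_adherent:
  fixes \<beta> :: "'i::wellorder"
  assumes A\<beta>: "A \<subseteq> szlenk_iter \<gamma> \<epsilon> \<beta> K" and mK: "\<mu> \<in> K" and cl: "wstar_adherent \<gamma> \<mu> A"
    and far: "\<And>a. a \<in> A \<Longrightarrow> \<epsilon> \<le> l1norm \<gamma> (\<lambda>\<xi>. \<mu> \<xi> - a \<xi>)"
    and succ: "is_pred \<beta> \<beta>'"
  shows "\<mu> \<in> szlenk_iter \<gamma> \<epsilon> \<beta>' K"
proof -
  have "\<mu> \<notin> S" if S: "wstar_slice \<gamma> (szlenk_iter \<gamma> \<epsilon> \<beta> K) S" "l1diam \<gamma> S < ereal \<epsilon>" for S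
  proof
    assume "\<mu> \<in> S"
    then obtain a where a: "a \<in> A" "a \<in> S" using slice_meets_adherent[OF A\<beta> cl _ S(1)] by blast
    have "ereal (l1norm \<gamma> (\<lambda>\<xi>. fst (\<mu>, a) \<xi> - snd (\<mu>, a) \<xi>)) \<le> l1diam \<gamma> S"
      unfolding l1diam_def by (rule SUP_upper) (use a \<open>\<mu> \<in> S\<close> in blast)
    then have diam: "ereal (l1norm \<gamma> (\<lambda>\<xi>. \<mu> \<xi> - a \<xi>)) \<le> l1diam \<gamma> S" by simp
    have "ereal \<epsilon> \<le> ereal (l1norm \<gamma> (\<lambda>\<xi>. \<mu> \<xi> - a \<xi>))" using far[OF a(1)] by simp
    from order_trans[OF this diam] have "ereal \<epsilon> \<le> l1diam \<gamma> S" .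
    then show False using S(2) by simp
  qed
  then show ?thesis unfolding szlenk_iter_pred[OF succ] szlenk_d_def
    using szlenk_iter_adherent[OF A\<beta> mK cl] by blast
qed

abbreviation szlenk_half :: "'a::wellorder \<Rightarrow> nat multiset \<Rightarrow> ('a \<Rightarrow> real) set" where
  "szlenk_half \<gamma> \<beta> \<equiv> szlenk_iter \<gamma> (1/2) \<beta> (dual_ball \<gamma>)"

text \<open>Halving: the average of 2^k point masses, each surviving beta derivations,
  survives beta + k derivations; it is the midpoint of the averages over the two halves,
  which survive beta + (k - 1) derivations and are at distance 1/2 from it.\<close>
lemma unif_halving:
  fixes \<gamma> :: "'a::wellorder" and B :: "nat multiset"
  assumes "finite S" "card S = 2^k" "\<forall>s\<in>S. s \<le> \<gamma> \<and> f_ind s \<in> szlenk_half \<gamma> B"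
  shows "unif S \<in> szlenk_half \<gamma> (B + replicate_mset k 0)"
  using assms
proof (induction k arbitrary: S)
  case 0
  then obtain s where "S = {s}" by (metis card_1_singletonE power_0)
  then show ?case using 0 by (simp add: unif_singleton)
next
  case (Suc k)
  obtain S1 where S1: "S1 \<subseteq> S" "card S1 = 2^k"
    using obtain_subset_with_card_n[of "2^k" S] Suc.prems(2) by auto
  define S2 where "S2 = S - S1"
  have fS1: "finite S1" using S1(1) Suc.prems(1) finite_subset by blast
  have fS2: "finite S2" using Suc.prems(1) S2_def by simp
  have cS2: "card S2 = 2^k"
    unfolding S2_def using card_Diff_subset[OF fS1 S1(1)] S1(2) Suc.prems(2) by simp
  have S2S: "S2 \<subseteq> S" unfolding S2_def by blast
  have dis: "S1 \<inter> S2 = {}" "S = S1 \<union> S2" unfolding S2_def using S1(1) by auto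
  have ne1: "S1 \<noteq> {}" using S1(2) by auto
  have ne2: "S2 \<noteq> {}" using cS2 by auto
  have Sg: "S \<subseteq> {..\<gamma>}" using Suc.prems(3) by auto
  have halves: "{unif S1, unif S2} \<subseteq> szlenk_half \<gamma> (B + replicate_mset k 0)"
    using Suc.IH[OF fS1 S1(2)] Suc.IH[OF fS2 cS2] Suc.prems(3) S1(1) S2S by blast
  have succ: "is_pred (B + replicate_mset k 0) (B + replicate_mset (Suc k) 0)"
    using is_pred_add_bot[of "B + replicate_mset k 0"] by (simp add: add.assoc bot_nat_def)
  have S1g: "S1 \<subseteq> {..\<gamma>}" and S2g: "S2 \<subseteq> {..\<gamma>}" using S1(1) S2S Sg by auto
  have midpoint: "pairing \<gamma> (unif S) x = (pairing \<gamma> (unif S1) x + pairing \<gamma> (unif S2) x) / 2" for x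
  proof -
    have "pairing \<gamma> (unif S) x = ((\<Sum>\<xi>\<in>S1. x \<xi>) + (\<Sum>\<xi>\<in>S2. x \<xi>)) / (2 * 2^k)"
      using unif_pairing[OF Suc.prems(1) Sg] dis fS1 fS2 Suc.prems(2) by (simp add: sum.union_disjoint)
    also have "\<dots> = ((\<Sum>\<xi>\<in>S1. x \<xi>) / 2^k + (\<Sum>\<xi>\<in>S2. x \<xi>) / 2^k) / 2"
      by (simp add: field_simps)
    also have "\<dots> = (pairing \<gamma> (unif S1) x + pairing \<gamma> (unif S2) x) / 2"
      using unif_pairing[OF fS1 S1g] unif_pairing[OF fS2 S2g] S1(2) cS2 by simp
    finally show ?thesis .
  qed
  have "wstar_adherent \<gamma> (unif S) {unif S1, unif S2}"
    unfolding wstar_adherent_def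
  proof (intro allI impI)
    fix x t assume "t < pairing \<gamma> (unif S) x"
    then have "2 * t < pairing \<gamma> (unif S1) x + pairing \<gamma> (unif S2) x"
      unfolding midpoint by (simp add: field_simps)
    then have "t < pairing \<gamma> (unif S1) x \<or> t < pairing \<gamma> (unif S2) x" by linarith
    then show "\<exists>a\<in>{unif S1, unif S2}. t < pairing \<gamma> a x" by blast
  qed
  moreover have "1/2 \<le> l1norm \<gamma> (\<lambda>\<xi>. unif S \<xi> - a \<xi>)" if "a \<in> {unif S1, unif S2}" for a
    using that dist_unif_half[OF Suc.prems(1) S1(1) Sg _ ne1] dist_unif_half[OF Suc.prems(1) S2S Sg _ ne2]
      Suc.prems(2) S1(2) cS2 by auto
  moreover have "unif S \<in> dual_ball \<gamma>" using unif_in_ball[OF Suc.prems(1) _ Sg] ne1 S1(1) by blast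
  ultimately show ?case using szlenk_iter_far_adherent[OF halves _ _ _ succ] by blast
qed

lemma cont_ord_left:
  fixes \<gamma> \<xi> :: "'a::wellorder"
  assumes c: "cont_ord \<gamma> x" and "\<xi> \<le> \<gamma>" "b < \<xi>" "x \<xi> > t"
  shows "\<exists>\<delta><\<xi>. \<forall>\<eta>. \<delta> < \<eta> \<and> \<eta> \<le> \<xi> \<longrightarrow> x \<eta> > t"
proof -
  have "\<exists>\<delta><\<xi>. \<forall>\<eta>. \<delta> < \<eta> \<and> \<eta> \<le> \<xi> \<longrightarrow> \<bar>x \<eta> - x \<xi>\<bar> < x \<xi> - t"
    using c assms(2-4) unfolding cont_ord_def by (meson diff_gt_0_iff_gt not_less_iff_gr_or_eq)
  then obtain \<delta> where \<delta>: "\<delta> < \<xi>" "\<forall>\<eta>. \<delta> < \<eta> \<and> \<eta> \<le> \<xi> \<longrightarrow> \<bar>x \<eta> - x \<xi>\<bar> < x \<xi> - t"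
    by blast
  have "x \<eta> > t" if "\<delta> < \<eta>" "\<eta> \<le> \<xi>" for \<eta>
    using \<delta>(2) that by force
  then show ?thesis using \<delta>(1) by blast
qed

lemma unif_sequence_adherent:
  fixes \<eta> :: "nat \<Rightarrow> 'a::wellorder"
  assumes mono: "strict_mono \<eta>" and below: "\<And>j. \<eta> j < \<xi>"
    and cofinal: "\<And>\<delta>. \<delta> < \<xi> \<Longrightarrow> \<exists>j. \<delta> < \<eta> j" and "\<xi> \<le> \<gamma>" and "0 < m"
  shows "wstar_adherent \<gamma> (f_ind \<xi>) {unif (\<eta> ` {j..<j + m}) | j. J \<le> j}"
  unfolding wstar_adherent_def
proof (intro allI impI)
  fix x t assume cx: "cont_ord \<gamma> x" and "t < pairing \<gamma> (f_ind \<xi>) x"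
  then have "t < x \<xi>" using f_ind_pairing[OF assms(4)] by simp
  then obtain \<delta> where \<delta>: "\<delta> < \<xi>" "\<forall>\<zeta>. \<delta> < \<zeta> \<and> \<zeta> \<le> \<xi> \<longrightarrow> t < x \<zeta>"
    using cont_ord_left[OF cx assms(4) below[of 0]] by blast
  obtain j0 where j0: "\<delta> < \<eta> j0" using cofinal[OF \<delta>(1)] by blast
  define j where "j = max J j0"
  define S where "S = \<eta> ` {j..<j + m}"
  have large: "t < x s" if "s \<in> S" for s
  proof -
    obtain i where "j0 \<le> i" "s = \<eta> i" using \<open>s \<in> S\<close> unfolding S_def j_def by auto
    then have "\<delta> < s" using j0 mono by (metis order_less_le_trans strict_mono_less_eq)
    then show ?thesis using \<delta>(2) below \<open>s = \<eta> i\<close> by (simp add: less_imp_le)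
  qed
  have fS: "finite S" unfolding S_def by simp
  have cS: "card S = m" unfolding S_def
    using card_image[of \<eta> "{j..<j + m}"] strict_mono_eq[OF mono] by (simp add: inj_on_def)
  have Sg: "S \<subseteq> {..\<gamma>}" using below assms(4) unfolding S_def by (auto intro: less_imp_le order_trans)
  have "real (card S) * t = (\<Sum>s\<in>S. t)" by simp
  also have "\<dots> < (\<Sum>s\<in>S. x s)" by (rule sum_strict_mono[OF fS]) (use cS \<open>0 < m\<close> large in auto)
  finally have "t < pairing \<gamma> (unif S) x"
    using unif_pairing[OF fS Sg] cS \<open>0 < m\<close> by (simp add: pos_less_divide_eq mult.commute)
  moreover have "unif S \<in> {unif (\<eta> ` {j..<j + m}) | j. J \<le> j}" unfolding S_def j_def by auto
  ultimately show "\<exists>a\<in>{unif (\<eta> ` {j..<j + m}) | j. J \<le> j}. t < pairing \<gamma> a x" by blast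
qed

lemma below_term_Suc:
  fixes \<nu> B :: "nat multiset"
  assumes "\<nu> < B + {#Suc a#}" and "\<forall>z\<in>#B. Suc a \<le> z"
  obtains J where "\<nu> \<le> B + replicate_mset J a"
proof
  define R where "R = filter_mset (\<lambda>y. y < Suc a) \<nu>"
  have "\<nu> \<le> B + R" unfolding R_def by (rule below_cnf_term) (use assms in auto)
  also have "R \<le> replicate_mset (size R) a" by (rule le_replicate_mset_bound) (auto simp: R_def)
  then have "B + R \<le> B + replicate_mset (size R) a" by (rule add_left_mono)
  finally show "\<nu> \<le> B + replicate_mset (size R) a" .
qed

lemma below_succ_exponent:
  fixes \<delta> \<zeta> :: "nat multiset multiset"
  assumes "\<delta> < add_mset (add_mset 0 e0) \<zeta>" and zge: "\<forall>z\<in>#\<zeta>. add_mset 0 e0 \<le> z"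
  obtains j where "\<delta> \<le> \<zeta> + replicate_mset j e0"
proof
  define R where "R = filter_mset (\<lambda>y. y < add_mset 0 e0) \<delta>"
  have "\<delta> \<le> \<zeta> + R" unfolding R_def by (rule below_cnf_term[OF zge]) (use assms in simp)
  moreover have "y \<le> e0" if "y \<in># R" for y
  proof -
    have "y < e0 + {#0#}" using that unfolding R_def by simp
    then have "y \<le> e0 + filter_mset (\<lambda>y. y < 0) y" by (intro below_cnf_term) auto
    then show "y \<le> e0" by simp
  qed
  then have "R \<le> replicate_mset (size R) e0" by (intro le_replicate_mset_bound) blast
  ultimately show "\<delta> \<le> \<zeta> + replicate_mset (size R) e0" by (meson add_left_mono order_trans)
qed

lemma below_limit_exponent:
  fixes \<delta> \<zeta> :: "nat multiset multiset"
  assumes "\<delta> < add_mset (add_mset a e0) \<zeta>" and zge: "\<forall>z\<in>#\<zeta>. add_mset a e0 \<le> z"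
    and e0ge: "\<forall>z\<in>#e0. a \<le> z"
  obtains N where "\<delta> < add_mset (e0 + replicate_mset N (a - 1)) \<zeta>"
proof
  define R where "R = filter_mset (\<lambda>y. y < add_mset a e0) \<delta>"
  define N where "N = Suc (sum_mset (image_mset size R))"
  have \<delta>R: "\<delta> \<le> \<zeta> + R" unfolding R_def by (rule below_cnf_term[OF zge]) (use assms in simp)
  have "y < e0 + replicate_mset N (a - 1)" if yR: "y \<in># R" for y
  proof -
    have "y < e0 + {#a#}" using yR unfolding R_def by simp
    then have y_le: "y \<le> e0 + filter_mset (\<lambda>z. z < a) y" by (rule below_cnf_term[OF e0ge])
    have "filter_mset (\<lambda>z. z < a) y < replicate_mset N (a - 1)"
    proof -
      have "filter_mset (\<lambda>z. z < a) y \<le> replicate_mset (size (filter_mset (\<lambda>z. z < a) y)) (a - 1)"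
        by (rule le_replicate_mset_bound) auto
      also have "\<dots> \<le> replicate_mset (size y) (a - 1)"
        by (rule replicate_mset_mono) (rule size_filter_mset_lesseq)
      also have "\<dots> < replicate_mset N (a - 1)"
      proof (rule replicate_mset_strict_mono)
        obtain R' where "R = add_mset y R'" using yR by (metis multi_member_split)
        then show "size y < N" unfolding N_def by simp
      qed
      finally show ?thesis .
    qed
    then have "e0 + filter_mset (\<lambda>z. z < a) y < e0 + replicate_mset N (a - 1)"
      by (rule add_strict_left_mono)
    with y_le show ?thesis by (rule order_le_less_trans)
  qed
  then have "R < {#e0 + replicate_mset N (a - 1)#}" by (intro less_single_mset) blast
  then have "\<zeta> + R < \<zeta> + {#e0 + replicate_mset N (a - 1)#}" by (rule add_strict_left_mono)
  with \<delta>R have "\<delta> < \<zeta> + {#e0 + replicate_mset N (a - 1)#}" by (rule order_le_less_trans)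
  then show "\<delta> < add_mset (e0 + replicate_mset N (a - 1)) \<zeta>" by simp
qed

section \<open>Point masses survive omega * e derivations\<close>

text \<open>Successor exponent e = e0 + 1: f_xi, xi = zeta + omega^e, is the weak*-limit of
  averages of 2^k point masses at zeta + omega^e0 * j, which survive
  omega * e0 + k derivations by induction and halving, and stays at distance at least 1/2
  from them.\<close>
lemma successor_exponent_stage:
  fixes \<gamma> \<zeta> :: "nat multiset multiset" and e0 :: "nat multiset"
  assumes IH: "\<And>\<zeta>'. \<forall>z\<in>#\<zeta>'. e0 \<le> z \<Longrightarrow> add_mset e0 \<zeta>' \<le> \<gamma>
                 \<Longrightarrow> f_ind (add_mset e0 \<zeta>') \<in> szlenk_half \<gamma> (image_mset Suc e0)"
    and zge: "\<forall>z\<in>#\<zeta>. add_mset 0 e0 \<le> z" and \<xi>\<gamma>: "add_mset (add_mset 0 e0) \<zeta> \<le> \<gamma>"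
  shows "f_ind (add_mset (add_mset 0 e0) \<zeta>) \<in> szlenk_half \<gamma> (image_mset Suc e0 + replicate_mset (Suc k) 0)"
proof -
  define \<xi> where "\<xi> = add_mset (add_mset 0 e0) \<zeta>"
  define B where "B = image_mset Suc e0"
  define \<eta> where "\<eta> j = \<zeta> + replicate_mset (Suc j) e0" for j
  have \<xi>_le: "\<xi> \<le> \<gamma>" unfolding \<xi>_def by (rule \<xi>\<gamma>)
  have e0_less: "e0 < add_mset 0 e0" by (rule le_multiset_right_total)
  have \<eta>_mono: "strict_mono \<eta>"
    unfolding strict_mono_def \<eta>_def by (intro allI impI add_strict_left_mono replicate_mset_strict_mono) simp
  have \<eta>_below: "\<eta> j < \<xi>" for j
  proof -
    have "replicate_mset (Suc j) e0 < {#add_mset 0 e0#}" by (rule less_single_mset) (use e0_less in auto)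
    then have "\<zeta> + replicate_mset (Suc j) e0 < \<zeta> + {#add_mset 0 e0#}" by (rule add_strict_left_mono)
    then show ?thesis unfolding \<eta>_def \<xi>_def by simp
  qed
  have \<eta>_cofinal: "\<exists>j. \<delta> < \<eta> j" if \<delta>: "\<delta> < \<xi>" for \<delta>
  proof -
    obtain j where "\<delta> \<le> \<zeta> + replicate_mset j e0"
      using below_succ_exponent[OF \<delta>[unfolded \<xi>_def] zge] by blast
    also have "\<dots> < \<eta> j" unfolding \<eta>_def by (intro add_strict_left_mono replicate_mset_strict_mono) simp
    finally show ?thesis by blast
  qed
  have \<eta>_survives: "\<eta> j \<le> \<gamma> \<and> f_ind (\<eta> j) \<in> szlenk_half \<gamma> B" for j
  proof -
    have "\<eta> j \<le> \<gamma>" using \<eta>_below[of j] \<xi>_le by (meson less_imp_le order_trans)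
    moreover have "\<eta> j = add_mset e0 (\<zeta> + replicate_mset j e0)" unfolding \<eta>_def by simp
    moreover have "\<forall>z\<in>#\<zeta>. e0 \<le> z" using zge e0_less by (meson less_imp_le order_trans)
    then have "\<forall>z\<in>#\<zeta> + replicate_mset j e0. e0 \<le> z" by auto
    ultimately show ?thesis using IH[of "\<zeta> + replicate_mset j e0"] unfolding B_def by simp
  qed
  define A where "A = {unif (\<eta> ` {j..<j + 2^k}) | j. 0 \<le> j}"
  have A_survives: "A \<subseteq> szlenk_half \<gamma> (B + replicate_mset k 0)"
  proof
    fix u assume "u \<in> A"
    then obtain j where u: "u = unif (\<eta> ` {j..<j + 2^k})" unfolding A_def by blast
    have "card (\<eta> ` {j..<j + 2^k}) = 2^k"
      using card_image[of \<eta> "{j..<j + 2^k}"] strict_mono_eq[OF \<eta>_mono] by (simp add: inj_on_def)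
    then show "u \<in> szlenk_half \<gamma> (B + replicate_mset k 0)"
      unfolding u by (rule unif_halving[OF finite_imageI[OF finite_atLeastLessThan]]) (use \<eta>_survives in blast)
  qed
  have adherent: "wstar_adherent \<gamma> (f_ind \<xi>) A"
    unfolding A_def by (rule unif_sequence_adherent[OF \<eta>_mono \<eta>_below \<eta>_cofinal \<xi>_le]) simp_all
  have far: "1/2 \<le> l1norm \<gamma> (\<lambda>\<theta>. f_ind \<xi> \<theta> - u \<theta>)" if "u \<in> A" for u
  proof -
    obtain j where u: "u = unif (\<eta> ` {j..<j + 2^k})" using \<open>u \<in> A\<close> unfolding A_def by blast
    have "\<eta> ` {j..<j + 2^k} \<subseteq> {..\<gamma>}" using \<eta>_survives by auto
    moreover have "\<xi> \<notin> \<eta> ` {j..<j + 2^k}" using \<eta>_below by (metis imageE less_irrefl)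
    ultimately show ?thesis unfolding u by (intro dist_f_ind_unif \<xi>_le) simp_all
  qed
  have succ: "is_pred (B + replicate_mset k 0) (B + replicate_mset (Suc k) 0)"
    using is_pred_add_bot[of "B + replicate_mset k 0"] by (simp add: add.assoc bot_nat_def)
  from szlenk_iter_far_adherent[OF A_survives f_ind_in_ball[OF \<xi>_le] adherent far succ]
  show ?thesis unfolding \<xi>_def B_def .
qed

text \<open>Limit exponent e = e0 + omega^a, a > 0: f_xi, xi = zeta + omega^e, is the weak*-limit
  of the point masses at zeta + omega^(e0 + omega^(a-1) * j), j \<ge> J, each of which
  survives omega * e0 + omega^a * J derivations by induction.\<close>
lemma limit_exponent_stage:
  fixes \<gamma> \<zeta> :: "nat multiset multiset" and e0 :: "nat multiset"
  assumes IH: "\<And>e' \<zeta>'. e' < add_mset a e0 \<Longrightarrow> \<forall>z\<in>#\<zeta>'. e' \<le> z \<Longrightarrow> add_mset e' \<zeta>' \<le> \<gamma>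
                 \<Longrightarrow> f_ind (add_mset e' \<zeta>') \<in> szlenk_half \<gamma> (image_mset Suc e')"
    and "0 < a" and e0ge: "\<forall>z\<in>#e0. a \<le> z"
    and zge: "\<forall>z\<in>#\<zeta>. add_mset a e0 \<le> z" and \<xi>\<gamma>: "add_mset (add_mset a e0) \<zeta> \<le> \<gamma>"
  shows "f_ind (add_mset (add_mset a e0) \<zeta>) \<in> szlenk_half \<gamma> (image_mset Suc e0 + replicate_mset J a)"
proof -
  define \<xi> where "\<xi> = add_mset (add_mset a e0) \<zeta>"
  define e' where "e' j = e0 + replicate_mset j (a - 1)" for j
  define \<eta> where "\<eta> j = add_mset (e' (J + j)) \<zeta>" for j
  have \<xi>_le: "\<xi> \<le> \<gamma>" unfolding \<xi>_def by (rule \<xi>\<gamma>)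
  have e'_less: "e' j < add_mset a e0" for j
  proof -
    have "replicate_mset j (a - 1) < {#a#}" by (rule less_single_mset) (use \<open>0 < a\<close> in auto)
    then have "e0 + replicate_mset j (a - 1) < e0 + {#a#}" by (rule add_strict_left_mono)
    then show ?thesis unfolding e'_def by simp
  qed
  have e'_mono: "i < j \<Longrightarrow> e' i < e' j" for i j
    unfolding e'_def by (intro add_strict_left_mono replicate_mset_strict_mono)
  have add_e'_mono: "i < j \<Longrightarrow> add_mset (e' i) \<zeta> < add_mset (e' j) \<zeta>" for i j
    using add_strict_left_mono[of "{#e' i#}" "{#e' j#}" \<zeta>] e'_mono by simp
  have \<eta>_mono: "strict_mono \<eta>" unfolding strict_mono_def \<eta>_def by (simp add: add_e'_mono)
  have \<eta>_below: "\<eta> j < \<xi>" for j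
    using add_strict_left_mono[of "{#e' (J + j)#}" "{#add_mset a e0#}" \<zeta>] e'_less
    unfolding \<eta>_def \<xi>_def by simp
  have \<eta>_cofinal: "\<exists>j. \<delta> < \<eta> j" if \<delta>: "\<delta> < \<xi>" for \<delta>
  proof -
    obtain N where "\<delta> < add_mset (e' N) \<zeta>"
      using below_limit_exponent[OF \<delta>[unfolded \<xi>_def] zge e0ge] unfolding e'_def by blast
    also have "\<dots> \<le> \<eta> N" unfolding \<eta>_def using add_e'_mono[of N "J + N"] by (cases J) auto
    finally show ?thesis by blast
  qed
  have exponent: "image_mset Suc (e' j) = image_mset Suc e0 + replicate_mset j a" for j
    unfolding e'_def using \<open>0 < a\<close> by simp
  define A where "A = {unif (\<eta> ` {j..<j + 1}) | j. 0 \<le> j}"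
  have A_survives: "A \<subseteq> szlenk_half \<gamma> (image_mset Suc e0 + replicate_mset J a)"
  proof
    fix u assume "u \<in> A"
    then obtain j where u: "u = f_ind (\<eta> j)" unfolding A_def by (auto simp: unif_singleton)
    have "\<forall>z\<in>#\<zeta>. e' (J + j) \<le> z" using zge e'_less by (meson less_imp_le order_trans)
    moreover have "\<eta> j \<le> \<gamma>" using \<eta>_below[of j] \<xi>_le by (meson less_imp_le order_trans)
    ultimately have "u \<in> szlenk_half \<gamma> (image_mset Suc (e' (J + j)))"
      unfolding u \<eta>_def by (rule IH[OF e'_less])
    moreover have "image_mset Suc e0 + replicate_mset J a \<le> image_mset Suc (e' (J + j))"
      unfolding exponent by (intro add_left_mono replicate_mset_mono) simp
    ultimately show "u \<in> szlenk_half \<gamma> (image_mset Suc e0 + replicate_mset J a)"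
      using szlenk_iter_anti by blast
  qed
  have adherent: "wstar_adherent \<gamma> (f_ind \<xi>) A"
    unfolding A_def by (rule unif_sequence_adherent[OF \<eta>_mono \<eta>_below \<eta>_cofinal \<xi>_le]) simp_all
  from szlenk_iter_adherent[OF A_survives f_ind_in_ball[OF \<xi>_le] adherent]
  show ?thesis unfolding \<xi>_def .
qed

text \<open>The stage omega * e is a limit, and every smaller stage lies below
  omega * e0 + k (e = e0 + 1) or omega * e0 + omega^a * J (e = e0 + omega^a, a > 0).\<close>
lemma f_ind_survives:
  fixes \<gamma> \<zeta> :: "nat multiset multiset" and e :: "nat multiset"
  assumes "\<forall>z\<in>#\<zeta>. e \<le> z" and "add_mset e \<zeta> \<le> \<gamma>"
  shows "f_ind (add_mset e \<zeta>) \<in> szlenk_half \<gamma> (image_mset Suc e)"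
  using assms
proof (induction e arbitrary: \<zeta> rule: less_induct)
  case (less e)
  show ?case
  proof (cases "e = {#}")
    case True
    then show ?thesis using f_ind_in_ball[OF less.prems(2)] unfolding szlenk_iter_def
      by (simp add: trans_iter_bot)
  next
    case False
    have "{#} < image_mset Suc e" using False by simp
    moreover have "\<not> (\<exists>\<mu>. is_pred \<mu> (image_mset Suc e))"
      by (rule no_pred_positive_exponents) (use False in auto)
    ultimately show ?thesis
    proof (rule szlenk_iter_limI)
      fix \<nu> assume \<nu>: "\<nu> < image_mset Suc e"
      define a where "a = Min (set_mset e)"
      define e0 where "e0 = e - {#a#}"
      have e_eq: "e = add_mset a e0" unfolding e0_def a_def using False by simp
      have e0ge: "\<forall>z\<in>#e0. a \<le> z" unfolding e0_def a_def by (meson Min_le finite_set_mset in_diffD)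
      obtain J where "\<nu> \<le> image_mset Suc e0 + replicate_mset J a"
        by (rule below_term_Suc[of \<nu> _ a]) (use \<nu> e_eq e0ge in auto)
      also have "\<dots> \<le> image_mset Suc e0 + replicate_mset (Suc J) a"
        by (intro add_left_mono replicate_mset_mono) simp
      finally have \<nu>_le: "\<nu> \<le> image_mset Suc e0 + replicate_mset (Suc J) a" .
      have "f_ind (add_mset e \<zeta>) \<in> szlenk_half \<gamma> (image_mset Suc e0 + replicate_mset (Suc J) a)"
      proof (cases "a = 0")
        case True
        have "e0 < e" unfolding e_eq by (rule le_multiset_right_total)
        show ?thesis unfolding e_eq True
          by (rule successor_exponent_stage[OF less.IH[OF \<open>e0 < e\<close>]])
            (use less.prems e_eq True in simp_all)
      next
        case False
        show ?thesis unfolding e_eq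
          by (rule limit_exponent_stage[OF less.IH[unfolded e_eq]]) (use less.prems e_eq e0ge False in simp_all)
      qed
      then show "f_ind (add_mset e \<zeta>) \<in> szlenk_half \<gamma> \<nu>" using szlenk_iter_anti[OF \<nu>_le] by blast
    qed
  qed
qed

theorem mainTheorem9:
  fixes \<alpha> n :: nat
  assumes "n \<ge> 1"
  defines "\<gamma> \<equiv> omega_pow (omega_pow_times \<alpha> n) :: nat multiset multiset"
  shows "f_ind \<gamma> \<in> szlenk_iter \<gamma> (1/2) (omega_pow_times (Suc \<alpha>) n :: nat multiset) (dual_ball \<gamma>)"
proof -
  have "\<gamma> = add_mset (replicate_mset n \<alpha>) {#}"
    unfolding \<gamma>_def omega_pow_def omega_pow_times_def by simp
  moreover have "omega_pow_times (Suc \<alpha>) n = image_mset Suc (replicate_mset n \<alpha>)"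
    unfolding omega_pow_times_def by simp
  ultimately show ?thesis using f_ind_survives[of "{#}" "replicate_mset n \<alpha>" \<gamma>] by simp
qed

end
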